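(* A translation-invariant quasifree state $\omega$ on $\mathcal{F}$ is invariant under the automorphism $G_{\mathcal{F}}$ if and only if the symbol of its majorana two-point matrix has the form $$Q^{(\omega)}(p)=\begin{bmatrix}q_{1,1}^{(\omega)}(p)&0\\0&q_{2,2}^{(\omega)}(p)\end{bmatrix},$$ where $q_{1,1}^{(\omega)}$ and $q_{2,2}^{(\omega)}$ are real $L^\infty([-\pi,\pi])$ functions taking values between $0$ and $2$ almost everywhere.
   Context: $\mathcal{F}=\mathrm{CAR}(\ell^2(\mathbb{Z}))$ is the C$^*$-algebra generated by $\mathbb{1}$ and $c_x,c_x^*$ ($x\in\mathbb{Z}$) with $c_xc_y^*+c_y^*c_x=\delta_{xy}\mathbb{1}$, $c_xc_y+c_yc_x=0$. Majorana operators: $m_{2x}=i(c_x-c_x^* )$, $m_{2x+1}=c_x+c_x^*$. The translation $\tau_{\mathcal{F}}(c_x)=c_{x+1}$ satisfies $\tau_{\mathcal{F}}(m_x)=m_{x+2}$. $G_{\mathcal{F}}$ is the automorphism of $\mathcal{F}$ determined by $G_{\mathcal{F}}(m_{2x})=m_{2x-2}$, $G_{\mathcal{F}}(m_{2x+1})=m_{2x+3}$. A state $\omega$ is quasifree if it vanishes on odd monomials of majorana operators and $\omega(m_{x_1}\cdots m_{x_{2n}})=\sum_\pi\mathrm{sgn}(\pi)\prod_{l=1}^n\omega(m_{x_{\pi(2l-1)}}m_{x_{\pi(2l)}})$, the sum over pairings. A translation-invariant ($\omega\circ\tau_{\mathcal F}=\omega$) quasifree state is described by its symbol $Q^{(\omega)}\in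 L^\infty_{2\times2}([-\pi,\pi])$ via $\begin{bmatrix}\omega(m_{2x}m_{2y})&\omega(m_{2x}m_{2y+1})\\\omega(m_{2x+1}m_{2y})&\omega(m_{2x+1}m_{2y+1})\end{bmatrix}=\frac1{2\pi}\int_{-\pi}^{\pi}Q^{(\omega)}(p)e^{-ip(x-y)}dp$, where a.e. $Q^\dagger=Q$, $Q(-p)=2\mathbb{1}-Q(p)^T$, $0\le Q(p)\le 2\mathbb{1}$. *)

theory Defs
  imports "HOL-Analysis.Analysis" "HOL-Combinatorics.Permutations"
begin

text \<open>Majorana operators m_n (n :: int) generate CAR(l2(Z)); a word (list of indices)
  [n1,...,nk] stands for the monomial m_n1 ... m_nk. A state on the CAR algebra is
  determined by (and equivalent to) its values on majorana monomials; we represent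
  a state by this moment functional om :: int list => complex.\<close>

text \<open>State condition: the moment functional respects the Clifford relations
  m_x m_y + m_y m_x = 2 delta_xy 1 (so it is a well-defined linear functional on the
  algebraic CAR algebra), is normalized and positive. Since m_x is self-adjoint,
  (m_w)^* = m_(rev w).\<close>
definition is_state :: "(int list \<Rightarrow> complex) \<Rightarrow> bool" where
  "is_state om \<longleftrightarrow>
     om [] = 1 \<and>
     (\<forall>u v x y. om (u @ [x, y] @ v) + om (u @ [y, x] @ v)
                 = (if x = y then 2 else 0) * om (u @ v)) \<and>
     (\<forall>(n::nat) (ws :: nat \<Rightarrow> int list) (cs :: nat \<Rightarrow> complex).
        let s = (\<Sum>i<n. \<Sum>j<n. cnj (cs i) * cs j * om (rev (ws i) @ ws j))
        in Im s = 0 \<and> Re s \<ge> 0)"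

text \<open>Pairings of {0,...,2n-1}: permutations sigma with sigma(2l) < sigma(2l+1) and
  sigma(0) < sigma(2) < ... (pairs are (sigma(2l), sigma(2l+1))).\<close>
definition pairings :: "nat \<Rightarrow> (nat \<Rightarrow> nat) set" where
  "pairings n = {\<sigma>. \<sigma> permutes {..<2*n} \<and> (\<forall>l<n. \<sigma> (2*l) < \<sigma> (2*l+1))
                     \<and> (\<forall>l. l + 1 < n \<longrightarrow> \<sigma> (2*l) < \<sigma> (2*l+2))}"

definition quasifree :: "(int list \<Rightarrow> complex) \<Rightarrow> bool" where
  "quasifree om \<longleftrightarrow>
     (\<forall>w. odd (length w) \<longrightarrow> om w = 0) \<and>
     (\<forall>w. even (length w) \<longrightarrow>
        om w = (\<Sum>\<sigma>\<in>pairings (length w div 2). of_int (sign \<sigma>) *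
                  (\<Prod>l<length w div 2. om [w ! \<sigma> (2*l), w ! \<sigma> (2*l+1)])))"

definition tauF_idx :: "int \<Rightarrow> int" where "tauF_idx n = n + 2"
definition GF_idx :: "int \<Rightarrow> int" where
  "GF_idx n = (if even n then n - 2 else n + 2)"

text \<open>omega o alpha = omega for an automorphism alpha acting on majoranas by an index map:
  equality on all monomials (which span a dense subalgebra).\<close>
definition invariant_under :: "(int \<Rightarrow> int) \<Rightarrow> (int list \<Rightarrow> complex) \<Rightarrow> bool" where
  "invariant_under g om \<longleftrightarrow> (\<forall>w. om (map g w) = om w)"

text \<open>Majorana index for row/column a of the 2x2 matrix at site x: a=1 -> 2x, a=2 -> 2x+1.\<close>
definition mj :: "int \<Rightarrow> 2 \<Rightarrow> int" where
  "mj x a = 2 * x + (if a = 1 then 0 else 1)"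

definition Linf_on :: "(real \<Rightarrow> 'b::real_normed_vector) \<Rightarrow> bool" where
  "Linf_on f \<longleftrightarrow> f \<in> borel_measurable (restrict_space lborel {-pi..pi}) \<and>
     (\<exists>C. AE p in lborel. p \<in> {-pi..pi} \<longrightarrow> norm (f p) \<le> C)"

definition is_symbol :: "(int list \<Rightarrow> complex) \<Rightarrow> (real \<Rightarrow> complex^2^2) \<Rightarrow> bool" where
  "is_symbol om Q \<longleftrightarrow> (\<forall>a b. Linf_on (\<lambda>p. Q p $ a $ b)) \<and>
     (\<forall>x y a b. om [mj x a, mj y b] =
        complex_of_real (1 / (2 * pi)) *
        (LINT p:{-pi..pi}|lborel. Q p $ a $ b * exp (- \<i> * complex_of_real p * of_int (x - y))))"

end

(*
  The two-point function of a translation-invariant state is given by the Fourier coefficients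
  of the entries of its symbol, and a quasifree state is determined by its two-point function.
  G_F moves the even majoranas by -2 and the odd ones by +2: it leaves the diagonal two-point
  functions unchanged and shifts the Fourier index of the off-diagonal ones by 2. So the state is
  G_F-invariant iff the Fourier coefficients of each off-diagonal entry q are 2-periodic, i.e. iff
  q(p)(1 - e^(2ip)) has vanishing Fourier coefficients, i.e. iff q = 0 a.e.

  The bounds 0 <= q_aa <= 2 come from positivity of the state: the kernels (x, y) |-> omega(m_x m_y)
  and, via the CAR, (x, y) |-> omega(m_y m_x) are positive semidefinite, and their symbols are q_aa
  and 2 - q_aa. A bounded function with positive semidefinite Fourier coefficients is nonnegative
  a.e.: squares of real polynomials approximate nonnegative continuous functions on the circle,
  cut-offs approximate indicators of closed sets, and inner regularity reaches all measurable sets.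
*)

theory Submission
  imports Defs
begin

section \<open>Integration over one period\<close>

abbreviation lborel_pi :: "real measure" where
  "lborel_pi \<equiv> restrict_space lborel {-pi..pi}"

lemma finite_measure_lborel_pi: "finite_measure lborel_pi"
  by (rule finite_measureI) (simp add: emeasure_restrict_space)

lemma emeasure_lborel_pi: "A \<subseteq> {-pi..pi} \<Longrightarrow> emeasure lborel_pi A = emeasure lborel A"
  by (rule emeasure_restrict_space) simp_all

lemma set_integral_eq_lborel_pi:
  fixes f :: "real \<Rightarrow> 'a::{banach, second_countable_topology}"
  shows "(LINT p:{-pi..pi}|lborel. f p) = integral\<^sup>L lborel_pi f"
  unfolding set_lebesgue_integral_def by (rule integral_restrict_space[symmetric]) simp

lemma AE_lborel_pi_iff:
  "(AE p in lborel_pi. P p) \<longleftrightarrow> (AE p in lborel. p \<in> {-pi..pi} \<longrightarrow> P p)"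
  by (simp add: AE_restrict_space_iff)

lemma Linf_on_iff:
  "Linf_on f \<longleftrightarrow>
     f \<in> borel_measurable lborel_pi \<and> (\<exists>C. AE p in lborel_pi. norm (f p) \<le> C)"
  by (simp add: Linf_on_def AE_lborel_pi_iff)

lemma Linf_on_integrable:
  fixes f :: "real \<Rightarrow> 'a::{banach, second_countable_topology}"
  assumes "Linf_on f"
  shows "integrable lborel_pi f"
proof -
  from assms obtain C where "AE p in lborel_pi. norm (f p) \<le> C" "f \<in> borel_measurable lborel_pi"
    unfolding Linf_on_iff by auto
  then show ?thesis
    by (rule finite_measure.integrable_const_bound[OF finite_measure_lborel_pi])
qed

lemma Linf_on_mult:
  fixes f g :: "real \<Rightarrow> 'a::{second_countable_topology, real_normed_algebra}"
  assumes "Linf_on f" "Linf_on g"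
  shows "Linf_on (\<lambda>p. f p * g p)"
proof -
  from assms obtain C D where C: "AE p in lborel_pi. norm (f p) \<le> C"
    and D: "AE p in lborel_pi. norm (g p) \<le> D"
    and "f \<in> borel_measurable lborel_pi" "g \<in> borel_measurable lborel_pi"
    unfolding Linf_on_iff by blast
  moreover have "AE p in lborel_pi. norm (f p * g p) \<le> C * D"
    using C D
  proof eventually_elim
    case (elim p)
    have "norm (f p * g p) \<le> norm (f p) * norm (g p)" by (rule norm_mult_ineq)
    also have "\<dots> \<le> C * D"
      using elim by (intro mult_mono) (auto intro: order_trans[OF norm_ge_zero])
    finally show ?case .
  qed
  ultimately show ?thesis unfolding Linf_on_iff by auto
qed

lemma Linf_on_diff:
  fixes f g :: "real \<Rightarrow> 'a::{second_countable_topology, real_normed_vector}"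
  assumes "Linf_on f" "Linf_on g"
  shows "Linf_on (\<lambda>p. f p - g p)"
proof -
  from assms obtain C D where C: "AE p in lborel_pi. norm (f p) \<le> C"
    and D: "AE p in lborel_pi. norm (g p) \<le> D"
    and "f \<in> borel_measurable lborel_pi" "g \<in> borel_measurable lborel_pi"
    unfolding Linf_on_iff by blast
  moreover have "AE p in lborel_pi. norm (f p - g p) \<le> C + D"
    using C D by eventually_elim (rule order_trans[OF norm_triangle_ineq4], simp)
  ultimately show ?thesis unfolding Linf_on_iff by auto
qed

lemma Linf_on_bounded_linear:
  fixes f :: "real \<Rightarrow> 'a::{real_normed_vector, second_countable_topology}"
    and g :: "'a \<Rightarrow> 'b::{real_normed_vector, second_countable_topology}"
  assumes "Linf_on f" "bounded_linear g"
  shows "Linf_on (\<lambda>p. g (f p))"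
proof -
  from assms(1) obtain C where C: "AE p in lborel_pi. norm (f p) \<le> C"
    and f: "f \<in> borel_measurable lborel_pi"
    unfolding Linf_on_iff by blast
  obtain K where K: "\<And>x. norm (g x) \<le> norm x * K" "0 < K"
    using bounded_linear.pos_bounded[OF assms(2)] by blast
  have "AE p in lborel_pi. norm (g (f p)) \<le> C * K"
    using C by eventually_elim (rule order_trans[OF K(1)], simp add: K(2))
  moreover have "(\<lambda>p. g (f p)) \<in> borel_measurable lborel_pi"
    using measurable_compose[OF f borel_measurable_continuous_onI[OF linear_continuous_on[OF assms(2)]]]
    by (simp add: o_def)
  ultimately show ?thesis unfolding Linf_on_iff by auto
qed

lemma Linf_on_continuous:
  fixes f :: "real \<Rightarrow> 'a::{real_normed_vector, second_countable_topology}"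
  assumes "continuous_on UNIV f"
  shows "Linf_on f"
proof -
  have "compact (f ` {-pi..pi})"
    by (rule compact_continuous_image) (auto intro: continuous_on_subset[OF assms])
  then obtain C where "\<forall>x\<in>f ` {-pi..pi}. norm x \<le> C"
    using compact_imp_bounded bounded_iff by metis
  then have "AE p in lborel_pi. norm (f p) \<le> C"
    by (auto simp: AE_lborel_pi_iff)
  moreover have "f \<in> borel_measurable lborel_pi"
    by (rule measurable_restrict_space1) (simp add: borel_measurable_continuous_onI assms)
  ultimately show ?thesis unfolding Linf_on_iff by auto
qed

lemma Linf_on_indicator: "closed T \<Longrightarrow> Linf_on (indicator T :: real \<Rightarrow> real)"
  unfolding Linf_on_iff
  by (auto intro!: measurable_restrict_space1 exI[of _ 1] simp: borel_closed indicator_def)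

lemma Linf_on_indicator_cis:
  assumes "closed K"
  shows "Linf_on (\<lambda>p. indicator K (cis p) :: real)"
proof -
  have "cis \<in> borel_measurable borel"
    by (intro borel_measurable_continuous_onI continuous_on_cis continuous_on_id)
  then have "(\<lambda>p. indicator K (cis p) :: real) \<in> borel_measurable lborel_pi"
    using assms by (intro measurable_restrict_space1)
      (simp add: measurable_lborel2 measurable_compose[OF _ borel_measurable_indicator] borel_closed)
  then show ?thesis
    unfolding Linf_on_iff by (auto intro!: exI[of _ 1] simp: indicator_def)
qed

section \<open>Trigonometric polynomials\<close>

definition trig_poly :: "(real \<Rightarrow> complex) \<Rightarrow> bool" where
  "trig_poly f \<longleftrightarrow>
     (\<exists>cs :: (complex \<times> int) list.
        \<forall>p. f p = (\<Sum>(c, k)\<leftarrow>cs. c * exp (\<i> * of_int k * of_real p)))"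

lemma trig_poly_exp: "trig_poly (\<lambda>p. c * exp (\<i> * of_int k * of_real p))"
  unfolding trig_poly_def by (rule exI[of _ "[(c, k)]"]) simp

lemma trig_poly_const: "trig_poly (\<lambda>p. c)"
  using trig_poly_exp[of c 0] by simp

lemma trig_poly_add:
  assumes "trig_poly f" "trig_poly g"
  shows "trig_poly (\<lambda>p. f p + g p)"
proof -
  from assms obtain cs ds where
    "\<And>p. f p = (\<Sum>(c, k)\<leftarrow>cs. c * exp (\<i> * of_int k * of_real p))"
    "\<And>p. g p = (\<Sum>(c, k)\<leftarrow>ds. c * exp (\<i> * of_int k * of_real p))"
    unfolding trig_poly_def by blast
  then show ?thesis
    unfolding trig_poly_def by (intro exI[of _ "cs @ ds"]) simp
qed

lemma sum_list_mult_sum_list: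
  fixes f g :: "_ \<Rightarrow> 'a::comm_semiring_0"
  shows "(\<Sum>x\<leftarrow>xs. f x) * (\<Sum>y\<leftarrow>ys. g y) = (\<Sum>(x, y)\<leftarrow>List.product xs ys. f x * g y)"
  by (induction xs) (simp_all add: distrib_right sum_list_const_mult o_def)

lemma trig_poly_mult:
  assumes "trig_poly f" "trig_poly g"
  shows "trig_poly (\<lambda>p. f p * g p)"
proof -
  from assms obtain cs ds where
    f: "\<And>p. f p = (\<Sum>(c, k)\<leftarrow>cs. c * exp (\<i> * of_int k * of_real p))" and
    g: "\<And>p. g p = (\<Sum>(c, k)\<leftarrow>ds. c * exp (\<i> * of_int k * of_real p))"
    unfolding trig_poly_def by blast
  let ?es = "map (\<lambda>((c, k), (d, l)). (c * d, k + l)) (List.product cs ds)"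
  have "f p * g p = (\<Sum>(c, k)\<leftarrow>?es. c * exp (\<i> * of_int k * of_real p))" for p
    unfolding f g sum_list_mult_sum_list
    by (simp add: o_def split_def algebra_simps flip: exp_add)
  then show ?thesis
    unfolding trig_poly_def by blast
qed

lemma trig_poly_sum_exp_form:
  assumes "trig_poly f"
  obtains n :: nat and c k where "\<And>p. f p = (\<Sum>j<n. c j * exp (\<i> * of_int (k j) * of_real p))"
proof -
  from assms obtain cs where cs: "\<And>p. f p = (\<Sum>(c, k)\<leftarrow>cs. c * exp (\<i> * of_int k * of_real p))"
    unfolding trig_poly_def by blast
  show ?thesis
    by (rule that[where n="length cs" and c="\<lambda>j. fst (cs ! j)" and k="\<lambda>j. snd (cs ! j)"])
       (simp add: cs sum_list_sum_nth atLeast0LessThan case_prod_beta)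
qed

lemma trig_poly_cos: "trig_poly (\<lambda>p. complex_of_real (cos p))"
proof -
  have "complex_of_real (cos p) =
      1/2 * exp (\<i> * of_int 1 * of_real p) + 1/2 * exp (\<i> * of_int (-1) * of_real p)" for p
    by (simp add: cos_exp_eq flip: cos_of_real)
  then show ?thesis
    by (simp only: trig_poly_add trig_poly_exp)
qed

lemma trig_poly_sin: "trig_poly (\<lambda>p. complex_of_real (sin p))"
proof -
  have "complex_of_real (sin p) =
      -\<i>/2 * exp (\<i> * of_int 1 * of_real p) + \<i>/2 * exp (\<i> * of_int (-1) * of_real p)" for p
    by (simp add: sin_exp_eq field_simps flip: sin_of_real)
  then show ?thesis
    by (simp only: trig_poly_add trig_poly_exp)
qed

lemma trig_poly_real_polynomial_cis:
  assumes "real_polynomial_function g"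
  shows "trig_poly (\<lambda>p. complex_of_real (g (cis p)))"
  using assms
proof (induction g rule: real_polynomial_function.induct)
  case (linear g)
  then interpret linear g
    by (rule bounded_linear.linear)
  have "cis p = cos p *\<^sub>R 1 + sin p *\<^sub>R \<i>" for p
    by (simp add: complex_eq_iff)
  then have "g (cis p) = cos p * g 1 + sin p * g \<i>" for p
    by (simp add: add scale)
  then show ?case
    by (simp add: trig_poly_add trig_poly_mult trig_poly_cos trig_poly_sin trig_poly_const)
next
  case (const c)
  show ?case by (rule trig_poly_const)
next
  case (add f g)
  then show ?case by (simp add: trig_poly_add)
next
  case (mult f g)
  then show ?case by (simp add: trig_poly_mult)
qed

section \<open>Nonnegativity tested against squared trigonometric polynomials\<close>

lemma real_polynomial_square_approx:
  fixes F :: "'a::euclidean_space \<Rightarrow> real"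
  assumes S: "compact S" and F: "continuous_on S F" "\<And>x. x \<in> S \<Longrightarrow> 0 \<le> F x" and e: "0 < e"
  obtains g where "real_polynomial_function g" "\<And>x. x \<in> S \<Longrightarrow> \<bar>F x - (g x)\<^sup>2\<bar> \<le> e"
proof -
  have sqrtF: "continuous_on S (\<lambda>x. sqrt (F x))"
    by (intro continuous_on_real_sqrt F(1))
  then obtain B where B: "\<And>x. x \<in> S \<Longrightarrow> \<bar>sqrt (F x)\<bar> \<le> B"
    using compact_imp_bounded[OF compact_continuous_image[OF sqrtF S]] unfolding bounded_iff by force
  define d where "d = min 1 (e / (2 * \<bar>B\<bar> + 1))"
  have "0 < d"
    using e by (simp add: d_def add_nonneg_pos)
  then obtain g where g: "real_polynomial_function g" "\<And>x. x \<in> S \<Longrightarrow> \<bar>sqrt (F x) - g x\<bar> < d"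
    using Stone_Weierstrass_real_polynomial_function[OF S sqrtF \<open>0 < d\<close>] by blast
  have "\<bar>F x - (g x)\<^sup>2\<bar> \<le> e" if x: "x \<in> S" for x
  proof -
    let ?s = "sqrt (F x)"
    have "d \<le> 1"
      by (simp add: d_def)
    then have "\<bar>?s + g x\<bar> \<le> 2 * \<bar>B\<bar> + 1"
      using B[OF x] g(2)[OF x] by linarith
    have "\<bar>F x - (g x)\<^sup>2\<bar> = \<bar>?s - g x\<bar> * \<bar>?s + g x\<bar>"
      using F(2)[OF x] by (simp add: power2_eq_square algebra_simps flip: abs_mult)
    also have "\<dots> \<le> d * (2 * \<bar>B\<bar> + 1)"
      using g(2)[OF x] \<open>\<bar>?s + g x\<bar> \<le> 2 * \<bar>B\<bar> + 1\<close> by (intro mult_mono) auto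
    also have "\<dots> \<le> e"
    proof -
      have "d \<le> e / (2 * \<bar>B\<bar> + 1)"
        unfolding d_def by simp
      then show ?thesis
        by (simp add: pos_le_divide_eq add_nonneg_pos)
    qed
    finally show ?thesis .
  qed
  with g(1) show ?thesis by (rule that)
qed

lemma tendsto_cutoff_indicator:
  fixes K :: "'a::metric_space set"
  assumes "closed K" "K \<noteq> {}"
  shows "(\<lambda>m. max 0 (1 - real m * infdist x K)) \<longlonglongrightarrow> indicator K x"
proof (cases "x \<in> K")
  case True
  then show ?thesis by simp
next
  case False
  then have "0 < infdist x K"
    using in_closed_iff_infdist_zero[OF assms] infdist_nonneg[of x K] by auto
  then obtain N where N: "1 < real N * infdist x K"
    using ex_less_of_nat_mult by blast
  have "max 0 (1 - real m * infdist x K) = 0" if "N \<le> m" for m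
    using N mult_right_mono[of "real N" "real m" "infdist x K"] that infdist_nonneg[of x K] by auto
  then have "\<forall>\<^sub>F m in sequentially. max 0 (1 - real m * infdist x K) = indicator K x"
    using False eventually_sequentially by auto
  then show ?thesis by (rule tendsto_eventually)
qed

lemma continuous_on_compose_cis:
  "continuous_on (sphere 0 1) f \<Longrightarrow> continuous_on UNIV (\<lambda>p. f (cis p))"
  by (rule continuous_on_compose2[OF _ continuous_on_cis[OF continuous_on_id]]) auto

lemma cis_eq_imp_eq:
  assumes p: "p \<in> {-pi<..<pi}" and t: "t \<in> {-pi..pi}" and eq: "cis t = cis p"
  shows "t = p"
proof -
  have Arg_p: "Arg (cis p) = p"
    using p by (intro Arg_cis) auto
  show ?thesis
  proof (cases "t = -pi")
    case True
    have "cis t = cis pi"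
      unfolding True cis.ctr by simp
    then have "Arg (cis p) = pi"
      using eq Arg_cis[of pi] pi_gt_zero by simp
    then have "p = pi"
      using Arg_p by simp
    with p show ?thesis
      by simp
  next
    case False
    then have "Arg (cis t) = t"
      using t by (intro Arg_cis) auto
    with Arg_p eq show ?thesis
      by metis
  qed
qed

lemma closed_subset_emeasure_pos:
  fixes E :: "'a::euclidean_space set"
  assumes E: "E \<in> sets lborel" "emeasure lborel E \<noteq> 0"
  obtains T where "closed T" "T \<subseteq> E" "emeasure lborel T \<noteq> 0"
proof -
  have "0 < emeasure lborel E"
    using E(2) by (simp add: zero_less_iff_neq_zero)
  then obtain x where x: "0 < x" "x < emeasure lborel E"
    using dense by blast
  then have "x < top"
    using order.strict_trans2[OF x(2) top_greatest] by blast
  then obtain e where e: "x = ennreal e" "0 \<le> e"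
    by (cases x) simp_all
  with x(1) have "0 < e"
    by simp
  moreover have "E \<in> sets lebesgue"
    using E(1) by simp
  ultimately obtain T where T: "closed T" "T \<subseteq> E" "emeasure lebesgue (E - T) < ennreal e"
    using sets_lebesgue_inner_closed by metis
  have T_borel: "T \<in> sets lborel"
    using T(1) by (simp add: borel_closed)
  have ET_borel: "E - T \<in> sets lborel"
    using E(1) T_borel by (rule sets.Diff)
  show ?thesis
  proof (rule that[OF T(1,2)], rule notI)
    assume T_null: "emeasure lborel T = 0"
    have "emeasure lborel E \<le> emeasure lborel T + emeasure lborel (E - T)"
      using emeasure_subadditive[OF T_borel ET_borel] by (simp add: Un_absorb1[OF T(2)])
    also have "\<dots> = emeasure lebesgue (E - T)"
      using ET_borel T_null by simp
    also have "\<dots> < x"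
      using T(3) e(1) by simp
    finally show False
      using x(2) by simp
  qed
qed

lemma AE_nonneg_if_integral_indicator_nonneg:
  fixes h :: "real \<Rightarrow> real"
  assumes h: "integrable lborel_pi h"
    and pos: "\<And>T. compact T \<Longrightarrow> T \<subseteq> {-pi..pi} \<Longrightarrow>
      0 \<le> integral\<^sup>L lborel_pi (\<lambda>p. h p * indicator T p)"
  shows "AE p in lborel_pi. 0 \<le> h p"
proof (rule ccontr)
  assume not_AE: "\<not> (AE p in lborel_pi. 0 \<le> h p)"
  define E where "E = {p \<in> space lborel_pi. \<not> 0 \<le> h p}"
  have "E \<in> sets lborel_pi"
    using h unfolding E_def by measurable
  then have E: "E \<in> sets lborel" "E \<subseteq> {-pi..pi}"
    by (simp_all add: sets_restrict_space_iff)
  have "emeasure lborel E \<noteq> 0"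
    using not_AE AE_iff_measurable[OF \<open>E \<in> sets lborel_pi\<close> E_def[symmetric]]
      emeasure_lborel_pi[OF E(2)] by auto
  then obtain T where T: "closed T" "T \<subseteq> E" "emeasure lborel T \<noteq> 0"
    using closed_subset_emeasure_pos[OF E(1)] by blast
  have T_pi: "T \<subseteq> {-pi..pi}"
    using T(2) E(2) by blast
  have "compact T"
    using T(1) bounded_subset[OF bounded_closed_interval T_pi] by (simp add: compact_eq_bounded_closed)
  have "integral\<^sup>L lborel_pi (\<lambda>p. h p * indicator T p) < integral\<^sup>L lborel_pi (\<lambda>p. 0)"
  proof (rule finite_measure.integral_less_AE[OF finite_measure_lborel_pi])
    show "integrable lborel_pi (\<lambda>p. h p * indicator T p)"
      using integrable_mult_indicator[of T lborel_pi h] h T(1)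
      by (simp add: mult.commute sets_restrict_space_iff borel_closed T_pi)
    show "emeasure lborel_pi T \<noteq> 0" "T \<in> sets lborel_pi"
      using T(1,3) T_pi by (simp_all add: emeasure_lborel_pi sets_restrict_space_iff borel_closed)
    show "AE p in lborel_pi. p \<in> T \<longrightarrow> h p * indicator T p \<noteq> 0"
      "AE p in lborel_pi. h p * indicator T p \<le> 0"
      by (intro AE_I2, use T(2) in \<open>auto simp: E_def indicator_def\<close>)+
  qed simp
  with pos[OF \<open>compact T\<close> T_pi] show False by simp
qed

lemma integral_mult_lower_bound:
  fixes h F G :: "'a \<Rightarrow> real"
  assumes "integrable M h" "integrable M (\<lambda>x. h x * F x)" "integrable M (\<lambda>x. h x * G x)"
    and close: "\<And>x. \<bar>F x - G x\<bar> \<le> d"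
  shows "integral\<^sup>L M (\<lambda>x. h x * G x) - d * integral\<^sup>L M (\<lambda>x. \<bar>h x\<bar>)
    \<le> integral\<^sup>L M (\<lambda>x. h x * F x)"
proof -
  have "h x * G x - d * \<bar>h x\<bar> \<le> h x * F x" for x
  proof -
    have "\<bar>h x * (F x - G x)\<bar> \<le> \<bar>h x\<bar> * d"
      unfolding abs_mult by (intro mult_left_mono close) auto
    then show ?thesis
      by (simp add: right_diff_distrib mult.commute)
  qed
  then have "integral\<^sup>L M (\<lambda>x. h x * G x - d * \<bar>h x\<bar>) \<le> integral\<^sup>L M (\<lambda>x. h x * F x)"
    using assms by (intro integral_mono) auto
  then show ?thesis
    using assms by simp
qed

context
  fixes h :: "real \<Rightarrow> real"
  assumes h_Linf: "Linf_on h"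
    and h_pos: "\<And>P. trig_poly P \<Longrightarrow> 0 \<le> integral\<^sup>L lborel_pi (\<lambda>p. h p * (cmod (P p))\<^sup>2)"
begin

lemma integral_mult_polynomial_square_nonneg:
  assumes "real_polynomial_function g"
  shows "0 \<le> integral\<^sup>L lborel_pi (\<lambda>p. h p * (g (cis p))\<^sup>2)"
  using h_pos[OF trig_poly_real_polynomial_cis[OF assms]] by simp

lemma integral_mult_continuous_nonneg:
  assumes F: "continuous_on (sphere 0 1) F" "\<And>z. z \<in> sphere 0 1 \<Longrightarrow> 0 \<le> F z"
  shows "0 \<le> integral\<^sup>L lborel_pi (\<lambda>p. h p * F (cis p))"
proof (rule field_le_epsilon)
  fix e :: real
  assume "0 < e"
  define A where "A = integral\<^sup>L lborel_pi (\<lambda>p. \<bar>h p\<bar>)"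
  define d where "d = e / (A + 1)"
  have "0 \<le> A"
    unfolding A_def by simp
  with \<open>0 < e\<close> have "0 < d" "d * A \<le> e"
    unfolding d_def by (simp_all add: field_simps)
  then obtain g where g: "real_polynomial_function g"
    "\<And>z. z \<in> sphere 0 1 \<Longrightarrow> \<bar>F z - (g z)\<^sup>2\<bar> \<le> d"
    using real_polynomial_square_approx[OF compact_sphere F] by blast
  have "continuous_on (sphere 0 1) g"
    using g(1) continuous_on_polymonial_function real_polynomial_function_eq by blast
  then have "integrable lborel_pi (\<lambda>p. h p * (g (cis p))\<^sup>2)"
    by (intro Linf_on_integrable Linf_on_mult h_Linf Linf_on_continuous continuous_on_power
        continuous_on_compose_cis)
  moreover have "integrable lborel_pi (\<lambda>p. h p * F (cis p))"
    by (intro Linf_on_integrable Linf_on_mult h_Linf Linf_on_continuous continuous_on_compose_cis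
        F(1))
  ultimately have "integral\<^sup>L lborel_pi (\<lambda>p. h p * (g (cis p))\<^sup>2) - d * A
      \<le> integral\<^sup>L lborel_pi (\<lambda>p. h p * F (cis p))"
    unfolding A_def
    by (intro integral_mult_lower_bound[OF Linf_on_integrable[OF h_Linf]]) (simp_all add: g(2))
  with \<open>d * A \<le> e\<close> show "0 \<le> integral\<^sup>L lborel_pi (\<lambda>p. h p * F (cis p)) + e"
    using integral_mult_polynomial_square_nonneg[OF g(1)] by linarith
qed

lemma integral_mult_indicator_closed_nonneg:
  assumes K: "closed K"
  shows "0 \<le> integral\<^sup>L lborel_pi (\<lambda>p. h p * indicator K (cis p))"
proof (cases "K = {}")
  case True
  then show ?thesis by simp
next
  case False
  define F where "F m z = max 0 (1 - real m * infdist z K)" for m :: nat and z :: complex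
  have F_cont: "continuous_on (sphere 0 1) (F m)" for m
    unfolding F_def by (intro continuous_on_max continuous_on_const continuous_on_diff
        continuous_on_mult continuous_on_infdist continuous_on_id)
  have F_bounds: "0 \<le> F m z" "F m z \<le> 1" for m z
    unfolding F_def using mult_nonneg_nonneg[OF of_nat_0_le_iff infdist_nonneg, of m z K] by simp_all
  have "(\<lambda>m. integral\<^sup>L lborel_pi (\<lambda>p. h p * F m (cis p)))
      \<longlonglongrightarrow> integral\<^sup>L lborel_pi (\<lambda>p. h p * indicator K (cis p))"
  proof (rule integral_dominated_convergence[where w="\<lambda>p. \<bar>h p\<bar>"])
    show "(\<lambda>p. h p * indicator K (cis p)) \<in> borel_measurable lborel_pi"
      by (intro borel_measurable_integrable Linf_on_integrable Linf_on_mult h_Linf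
          Linf_on_indicator_cis K)
    show "(\<lambda>p. h p * F m (cis p)) \<in> borel_measurable lborel_pi" for m
      by (intro borel_measurable_integrable Linf_on_integrable Linf_on_mult h_Linf
          Linf_on_continuous continuous_on_compose_cis F_cont)
    show "integrable lborel_pi (\<lambda>p. \<bar>h p\<bar>)"
      by (intro integrable_abs Linf_on_integrable h_Linf)
    show "AE p in lborel_pi. (\<lambda>m. h p * F m (cis p)) \<longlonglongrightarrow> h p * indicator K (cis p)"
      unfolding F_def by (intro AE_I2 tendsto_mult_left tendsto_cutoff_indicator K False)
    show "AE p in lborel_pi. norm (h p * F m (cis p)) \<le> \<bar>h p\<bar>" for m
      using F_bounds[of m] by (intro AE_I2) (simp add: abs_mult mult_left_le)
  qed
  moreover have "0 \<le> integral\<^sup>L lborel_pi (\<lambda>p. h p * F m (cis p))" for m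
    using F_bounds by (intro integral_mult_continuous_nonneg F_cont)
  ultimately show ?thesis
    by (intro LIMSEQ_le_const) auto
qed

lemma integral_mult_indicator_compact_nonneg:
  assumes T: "compact T" "T \<subseteq> {-pi..pi}"
  shows "0 \<le> integral\<^sup>L lborel_pi (\<lambda>p. h p * indicator T p)"
proof -
  have closed_cis_T: "closed (cis ` T)"
    using T(1) by (intro compact_imp_closed compact_continuous_image continuous_on_cis continuous_on_id)
  have cis_mem: "cis p \<in> cis ` T \<longleftrightarrow> p \<in> T" if p: "p \<in> {-pi<..<pi}" for p
  proof
    assume "cis p \<in> cis ` T"
    then obtain t where t: "t \<in> T" "cis t = cis p"
      by (auto simp: eq_commute)
    then have "t = p"
      using cis_eq_imp_eq[OF p] T(2) by blast
    with t(1) show "p \<in> T"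
      by simp
  qed simp
  have "AE p in lborel. p \<in> {-pi..pi} \<longrightarrow>
      h p * indicator (cis ` T) (cis p) = h p * indicator T p"
    using AE_lborel_singleton[of "-pi"] AE_lborel_singleton[of pi]
  proof eventually_elim
    case (elim p)
    show ?case
    proof
      assume "p \<in> {-pi..pi}"
      with elim have "p \<in> {-pi<..<pi}"
        by auto
      then show "h p * indicator (cis ` T) (cis p) = h p * indicator T p"
        by (simp add: indicator_def cis_mem)
    qed
  qed
  then have "AE p in lborel_pi. h p * indicator (cis ` T) (cis p) = h p * indicator T p"
    unfolding AE_lborel_pi_iff .
  then have "integral\<^sup>L lborel_pi (\<lambda>p. h p * indicator (cis ` T) (cis p))
      = integral\<^sup>L lborel_pi (\<lambda>p. h p * indicator T p)"
    by (intro integral_cong_AE borel_measurable_integrable Linf_on_integrable Linf_on_mult h_Linf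
        Linf_on_indicator_cis Linf_on_indicator closed_cis_T compact_imp_closed T(1))
  with integral_mult_indicator_closed_nonneg[OF closed_cis_T] show ?thesis
    by simp
qed

lemma AE_nonneg_if_trig_poly_tests_nonneg: "AE p in lborel_pi. 0 \<le> h p"
  by (intro AE_nonneg_if_integral_indicator_nonneg Linf_on_integrable h_Linf
      integral_mult_indicator_compact_nonneg)

end

section \<open>Fourier coefficients\<close>

definition fourier_coeff :: "(real \<Rightarrow> complex) \<Rightarrow> int \<Rightarrow> complex" where
  "fourier_coeff f m = complex_of_real (1 / (2 * pi)) *
     integral\<^sup>L lborel_pi (\<lambda>p. f p * exp (- \<i> * complex_of_real p * of_int m))"

lemma Linf_on_exp: "Linf_on (\<lambda>p. exp (- \<i> * complex_of_real p * of_int m))"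
  by (intro Linf_on_continuous continuous_intros)

lemma integrable_mult_exp:
  "Linf_on f \<Longrightarrow> integrable lborel_pi (\<lambda>p. f p * exp (- \<i> * complex_of_real p * of_int m))"
  by (intro Linf_on_integrable Linf_on_mult Linf_on_exp)

lemma integral_exp_lborel_pi:
  "integral\<^sup>L lborel_pi (\<lambda>p. exp (- \<i> * complex_of_real p * of_int m)) =
     (if m = 0 then complex_of_real (2 * pi) else 0)"
proof (cases "m = 0")
  case True
  have "measure lborel_pi {-pi..pi} = measure lborel {-pi..pi::real}"
    by (rule measure_restrict_space) simp_all
  then show ?thesis
    using True by (simp add: scaleR_conv_of_real)
next
  case False
  define c where "c = - \<i> * of_int m"
  have "c \<noteq> 0"
    using False by (simp add: c_def)
  have deriv: "((\<lambda>p. exp (c * complex_of_real p) / c) has_vector_derivative exp (c * complex_of_real p))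
      (at p within X)" for p X
  proof -
    have "((\<lambda>z. exp (c * z) / c) has_field_derivative exp (c * complex_of_real p))
        (at (complex_of_real p))"
      using \<open>c \<noteq> 0\<close> by (auto intro!: derivative_eq_intros)
    from has_vector_derivative_real_field[OF this] show ?thesis
      by (rule has_vector_derivative_at_within)
  qed
  have "exp (c * complex_of_real (2 * pi)) = 1"
    unfolding exp_eq_1 c_def by (intro conjI exI[of _ "-m"]) simp_all
  moreover have "c * complex_of_real pi = c * complex_of_real (-pi) + c * complex_of_real (2 * pi)"
    by (simp add: algebra_simps)
  then have "exp (c * complex_of_real pi) = exp (c * complex_of_real (-pi)) * exp (c * complex_of_real (2 * pi))"
    by (simp only: exp_add)
  ultimately have "exp (c * complex_of_real pi) = exp (c * complex_of_real (-pi))"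
    by simp
  have "integral\<^sup>L lborel_pi (\<lambda>p. exp (c * complex_of_real p))
      = (LBINT p=-pi..pi. exp (c * complex_of_real p))"
    by (simp add: interval_integral_Icc set_integral_eq_lborel_pi)
  also have "\<dots> = exp (c * complex_of_real pi) / c - exp (c * complex_of_real (-pi)) / c"
    by (rule interval_integral_FTC_finite) (intro continuous_intros, rule deriv)
  also have "\<dots> = 0"
    using \<open>exp (c * complex_of_real pi) = exp (c * complex_of_real (-pi))\<close> by simp
  finally show ?thesis
    using False by (simp add: c_def mult_ac)
qed

lemma fourier_coeff_const: "fourier_coeff (\<lambda>p. c) m = (if m = 0 then c else 0)"
  unfolding fourier_coeff_def integral_mult_right_zero integral_exp_lborel_pi
  by simp

lemma fourier_coeff_diff:
  assumes "Linf_on f" "Linf_on g"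
  shows "fourier_coeff (\<lambda>p. f p - g p) m = fourier_coeff f m - fourier_coeff g m"
  unfolding fourier_coeff_def
  using integrable_mult_exp[OF assms(1)] integrable_mult_exp[OF assms(2)]
  by (simp add: left_diff_distrib right_diff_distrib)

lemma fourier_coeff_uminus: "fourier_coeff (\<lambda>p. - f p) m = - fourier_coeff f m"
  unfolding fourier_coeff_def by simp

lemma fourier_coeff_mult_exp:
  "fourier_coeff (\<lambda>p. f p * exp (\<i> * of_int k * complex_of_real p)) m = fourier_coeff f (m - k)"
proof -
  have "exp (\<i> * of_int k * complex_of_real p) * exp (- \<i> * complex_of_real p * of_int m)
      = exp (- \<i> * complex_of_real p * of_int (m - k))" for p
    by (simp add: algebra_simps flip: exp_add)
  then show ?thesis
    unfolding fourier_coeff_def by (simp add: mult.assoc)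
qed

lemma fourier_coeff_AE_zero:
  assumes "AE p in lborel_pi. f p = 0"
  shows "fourier_coeff f m = 0"
proof -
  have "AE p in lborel_pi. f p * exp (- \<i> * complex_of_real p * of_int m) = 0"
    using assms by eventually_elim simp
  then show ?thesis
    unfolding fourier_coeff_def by (simp add: integral_eq_zero_AE)
qed

lemma cmod_sum_exp_square:
  "complex_of_real ((cmod (\<Sum>j<n. c j * exp (\<i> * of_int (k j) * of_real p)))\<^sup>2)
     = (\<Sum>i<n. \<Sum>j<n. cnj (c i) * c j * exp (- \<i> * complex_of_real p * of_int (k i - k j)))"
proof -
  let ?P = "\<Sum>j<n. c j * exp (\<i> * of_int (k j) * of_real p)"
  have "complex_of_real ((cmod ?P)\<^sup>2) = cnj ?P * ?P"
    unfolding complex_norm_square by (rule mult.commute)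
  also have "\<dots> = (\<Sum>i<n. \<Sum>j<n. cnj (c i) * exp (- \<i> * of_int (k i) * of_real p) *
      (c j * exp (\<i> * of_int (k j) * of_real p)))"
    by (simp add: exp_cnj sum_product)
  also have "\<dots> = (\<Sum>i<n. \<Sum>j<n. cnj (c i) * c j * exp (- \<i> * complex_of_real p * of_int (k i - k j)))"
    by (intro sum.cong refl) (simp add: algebra_simps flip: exp_add)
  finally show ?thesis .
qed

lemma integral_mult_cmod_sum_exp_square:
  assumes "Linf_on f"
  shows "integral\<^sup>L lborel_pi (\<lambda>p. f p *
      complex_of_real ((cmod (\<Sum>j<n. c j * exp (\<i> * of_int (k j) * of_real p)))\<^sup>2))
    = complex_of_real (2 * pi) * (\<Sum>i<n. \<Sum>j<n. cnj (c i) * c j * fourier_coeff f (k i - k j))"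
proof -
  have "integral\<^sup>L lborel_pi (\<lambda>p. f p *
      complex_of_real ((cmod (\<Sum>j<n. c j * exp (\<i> * of_int (k j) * of_real p)))\<^sup>2))
    = integral\<^sup>L lborel_pi (\<lambda>p. \<Sum>i<n. \<Sum>j<n.
        cnj (c i) * c j * (f p * exp (- \<i> * complex_of_real p * of_int (k i - k j))))"
    unfolding cmod_sum_exp_square by (simp add: sum_distrib_left mult_ac)
  also have "\<dots> = (\<Sum>i<n. \<Sum>j<n. cnj (c i) * c j *
      integral\<^sup>L lborel_pi (\<lambda>p. f p * exp (- \<i> * complex_of_real p * of_int (k i - k j))))"
  proof -
    have "integrable lborel_pi
        (\<lambda>p. cnj (c i) * c j * (f p * exp (- \<i> * complex_of_real p * of_int (k i - k j))))" for i j
      by (intro integrable_mult_right integrable_mult_exp assms)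
    then show ?thesis
      by (simp add: Bochner_Integration.integral_sum integrable_sum)
  qed
  also have "\<dots> = complex_of_real (2 * pi) *
      (\<Sum>i<n. \<Sum>j<n. cnj (c i) * c j * fourier_coeff f (k i - k j))"
    by (simp add: fourier_coeff_def sum_distrib_left mult_ac)
  finally show ?thesis .
qed

definition positive_kernel :: "('a \<Rightarrow> 'a \<Rightarrow> complex) \<Rightarrow> bool" where
  "positive_kernel K \<longleftrightarrow> (\<forall>n (c :: nat \<Rightarrow> complex) (k :: nat \<Rightarrow> 'a).
     Im (\<Sum>i<n. \<Sum>j<n. cnj (c i) * c j * K (k i) (k j)) = 0 \<and>
     0 \<le> Re (\<Sum>i<n. \<Sum>j<n. cnj (c i) * c j * K (k i) (k j)))"

lemma positive_kernel_zero: "positive_kernel (\<lambda>x y. 0)"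
  by (simp add: positive_kernel_def)

lemma positive_kernel_comp:
  assumes "positive_kernel K"
  shows "positive_kernel (\<lambda>x y. K (g x) (g y))"
  unfolding positive_kernel_def
proof (intro allI)
  fix n and c :: "nat \<Rightarrow> complex" and k :: "nat \<Rightarrow> 'b"
  show "Im (\<Sum>i<n. \<Sum>j<n. cnj (c i) * c j * K (g (k i)) (g (k j))) = 0 \<and>
      0 \<le> Re (\<Sum>i<n. \<Sum>j<n. cnj (c i) * c j * K (g (k i)) (g (k j)))"
    using assms[unfolded positive_kernel_def, rule_format, where n=n and c=c and k="\<lambda>i. g (k i)"] .
qed

lemma positive_kernel_swap:
  assumes "positive_kernel K"
  shows "positive_kernel (\<lambda>x y. K y x)"
  unfolding positive_kernel_def
proof (intro allI)
  fix n and c :: "nat \<Rightarrow> complex" and k :: "nat \<Rightarrow> 'a"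
  have "(\<Sum>i<n. \<Sum>j<n. cnj (c i) * c j * K (k j) (k i))
      = (\<Sum>i<n. \<Sum>j<n. cnj (cnj (c i)) * cnj (c j) * K (k i) (k j))"
    by (subst sum.swap) (simp add: mult_ac)
  then show "Im (\<Sum>i<n. \<Sum>j<n. cnj (c i) * c j * K (k j) (k i)) = 0 \<and>
      0 \<le> Re (\<Sum>i<n. \<Sum>j<n. cnj (c i) * c j * K (k j) (k i))"
    using assms[unfolded positive_kernel_def, rule_format, where n=n and c="\<lambda>i. cnj (c i)" and k=k] by simp
qed

lemma AE_nonneg_if_positive_kernel:
  assumes f: "Linf_on f" and pos: "positive_kernel (\<lambda>x y. fourier_coeff f (x - y))"
  shows "AE p in lborel_pi. Im (f p) = 0 \<and> 0 \<le> Re (f p)"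
proof -
  have moments: "0 \<le> integral\<^sup>L lborel_pi (\<lambda>p. Re (f p) * (cmod (P p))\<^sup>2) \<and>
      integral\<^sup>L lborel_pi (\<lambda>p. Im (f p) * (cmod (P p))\<^sup>2) = 0" if trig: "trig_poly P" for P
  proof -
    obtain n :: nat and c k where P: "\<And>p. P p = (\<Sum>j<n. c j * exp (\<i> * of_int (k j) * of_real p))"
      using trig_poly_sum_exp_form[OF trig] by blast
    define S where "S = (\<Sum>i<n. \<Sum>j<n. cnj (c i) * c j * fourier_coeff f (k i - k j))"
    have "continuous_on UNIV P"
      unfolding P[abs_def] by (intro continuous_intros)
    then have int: "integrable lborel_pi (\<lambda>p. f p * complex_of_real ((cmod (P p))\<^sup>2))"
      by (intro Linf_on_integrable Linf_on_mult f Linf_on_continuous continuous_on_of_real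
          continuous_on_power continuous_on_norm)
    have I: "integral\<^sup>L lborel_pi (\<lambda>p. f p * complex_of_real ((cmod (P p))\<^sup>2))
        = complex_of_real (2 * pi) * S"
      unfolding P S_def by (rule integral_mult_cmod_sum_exp_square[OF f])
    have Re_Im:
      "(\<lambda>p. Re (f p) * (cmod (P p))\<^sup>2) = (\<lambda>p. Re (f p * complex_of_real ((cmod (P p))\<^sup>2)))"
      "(\<lambda>p. Im (f p) * (cmod (P p))\<^sup>2) = (\<lambda>p. Im (f p * complex_of_real ((cmod (P p))\<^sup>2)))"
      by simp_all
    have "integral\<^sup>L lborel_pi (\<lambda>p. Re (f p) * (cmod (P p))\<^sup>2) = 2 * pi * Re S"
      "integral\<^sup>L lborel_pi (\<lambda>p. Im (f p) * (cmod (P p))\<^sup>2) = 2 * pi * Im S"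
      unfolding Re_Im integral_Re[OF int] integral_Im[OF int] I by simp_all
    moreover have "Im S = 0" "0 \<le> Re S"
      using pos unfolding positive_kernel_def S_def by blast+
    ultimately show ?thesis
      by simp
  qed
  have Re_f: "Linf_on (\<lambda>p. Re (f p))" and Im_f: "Linf_on (\<lambda>p. Im (f p))"
    using Linf_on_bounded_linear[OF f bounded_linear_Re] Linf_on_bounded_linear[OF f bounded_linear_Im] .
  have "AE p in lborel_pi. 0 \<le> Re (f p)"
    using Re_f by (rule AE_nonneg_if_trig_poly_tests_nonneg) (use moments in blast)
  moreover have "AE p in lborel_pi. 0 \<le> Im (f p)"
    using Im_f by (rule AE_nonneg_if_trig_poly_tests_nonneg) (use moments in simp)
  moreover have "AE p in lborel_pi. 0 \<le> - Im (f p)"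
    using Linf_on_bounded_linear[OF Im_f bounded_linear_minus[OF bounded_linear_ident]]
    by (rule AE_nonneg_if_trig_poly_tests_nonneg) (use moments in simp)
  ultimately show ?thesis
    by eventually_elim simp
qed

lemma AE_zero_if_fourier_coeff_zero:
  assumes f: "Linf_on f" and zero: "\<And>m. fourier_coeff f m = 0"
  shows "AE p in lborel_pi. f p = 0"
proof -
  have "AE p in lborel_pi. Im (f p) = 0 \<and> 0 \<le> Re (f p)"
    using f by (rule AE_nonneg_if_positive_kernel) (simp add: zero positive_kernel_zero)
  moreover have "AE p in lborel_pi. Im (- f p) = 0 \<and> 0 \<le> Re (- f p)"
    using Linf_on_bounded_linear[OF f bounded_linear_minus[OF bounded_linear_ident]]
    by (rule AE_nonneg_if_positive_kernel) (simp add: fourier_coeff_uminus zero positive_kernel_zero)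
  ultimately show ?thesis
    by eventually_elim (simp add: complex_eq_iff)
qed

lemma exp_2_i_eq_1_imp_zero:
  assumes "p \<in> {-pi<..<pi}" "exp (2 * \<i> * complex_of_real p) = 1"
  shows "p = 0"
proof -
  have "2 * \<i> * complex_of_real p = 0"
  proof (rule exp_complex_eqI)
    show "\<bar>Im (2 * \<i> * complex_of_real p) - Im 0\<bar> < 2 * pi"
      using assms(1) by (simp add: abs_less_iff)
    show "exp (2 * \<i> * complex_of_real p) = exp 0"
      using assms(2) by simp
  qed
  then show ?thesis
    by simp
qed

lemma AE_zero_if_fourier_coeff_2_periodic:
  assumes f: "Linf_on f" and periodic: "\<And>m. fourier_coeff f (m + 2) = fourier_coeff f m"
  shows "AE p in lborel_pi. f p = 0"
proof -
  define g where "g p = f p - f p * exp (\<i> * of_int 2 * complex_of_real p)" for p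
  have f_exp: "Linf_on (\<lambda>p. f p * exp (\<i> * of_int 2 * complex_of_real p))"
    by (intro Linf_on_mult f Linf_on_continuous continuous_intros)
  have "fourier_coeff g m = fourier_coeff f m - fourier_coeff f (m - 2)" for m
    unfolding g_def fourier_coeff_diff[OF f f_exp] fourier_coeff_mult_exp ..
  then have "fourier_coeff g m = 0" for m
    using periodic[of "m - 2"] by simp
  moreover have "Linf_on g"
    unfolding g_def by (rule Linf_on_diff[OF f f_exp])
  ultimately have "AE p in lborel_pi. g p = 0"
    by (intro AE_zero_if_fourier_coeff_zero)
  moreover have "AE p in lborel. p \<noteq> -pi \<and> p \<noteq> 0 \<and> p \<noteq> pi"
    using AE_lborel_singleton[of "-pi"] AE_lborel_singleton[of 0] AE_lborel_singleton[of pi]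
    by eventually_elim simp
  ultimately show ?thesis
    unfolding AE_lborel_pi_iff
  proof eventually_elim
    case (elim p)
    show ?case
    proof
      assume "p \<in> {-pi..pi}"
      with elim(2) have "p \<in> {-pi<..<pi}" "p \<noteq> 0"
        by auto
      then have "exp (2 * \<i> * complex_of_real p) \<noteq> 1"
        using exp_2_i_eq_1_imp_zero by blast
      moreover have "f p * (1 - exp (2 * \<i> * complex_of_real p)) = 0"
        using elim(1) \<open>p \<in> {-pi..pi}\<close> by (simp add: g_def algebra_simps)
      ultimately show "f p = 0"
        by simp
    qed
  qed
qed

section \<open>Quasifree states and their symbols\<close>

lemma is_state_anticommutator:
  assumes "is_state om"
  shows "om [x, y] + om [y, x] = (if x = y then 2 else 0)"
proof -
  have "om ([] @ [x, y] @ []) + om ([] @ [y, x] @ []) = (if x = y then 2 else 0) * om ([] @ [])"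
    using assms unfolding is_state_def by blast
  then show ?thesis
    using assms by (simp add: is_state_def)
qed

lemma is_state_positive_kernel: "is_state om \<Longrightarrow> positive_kernel (\<lambda>u v. om (rev u @ v))"
  unfolding is_state_def positive_kernel_def Let_def by blast

lemma is_symbol_Linf: "is_symbol om Q \<Longrightarrow> Linf_on (\<lambda>p. Q p $ a $ b)"
  unfolding is_symbol_def by blast

lemma is_symbol_two_point:
  "is_symbol om Q \<Longrightarrow> om [mj x a, mj y b] = fourier_coeff (\<lambda>p. Q p $ a $ b) (x - y)"
  unfolding is_symbol_def fourier_coeff_def set_integral_eq_lborel_pi by blast

lemma is_symbol_two_point_swap:
  assumes "is_state om" "is_symbol om Q"
  shows "om [mj y a, mj x a] = fourier_coeff (\<lambda>p. 2 - Q p $ a $ a) (x - y)"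
proof -
  have mj_eq_iff: "mj x a = mj y a \<longleftrightarrow> x - y = 0"
    by (simp add: mj_def)
  have "om [mj y a, mj x a] = (if mj x a = mj y a then 2 else 0) - om [mj x a, mj y a]"
    using is_state_anticommutator[OF assms(1), of "mj x a" "mj y a"] by (simp add: eq_diff_eq add.commute)
  also have "\<dots> = (if x - y = 0 then 2 else 0) - om [mj x a, mj y a]"
    unfolding mj_eq_iff ..
  also have "\<dots> = fourier_coeff (\<lambda>p. 2 - Q p $ a $ a) (x - y)"
    by (simp add: fourier_coeff_diff Linf_on_continuous is_symbol_Linf[OF assms(2)]
        fourier_coeff_const is_symbol_two_point[OF assms(2)])
  finally show ?thesis .
qed

lemma symbol_diagonal_real_bounded:
  assumes "is_state om" "is_symbol om Q"
  shows "AE p in lborel_pi. Im (Q p $ a $ a) = 0 \<and> 0 \<le> Re (Q p $ a $ a) \<and> Re (Q p $ a $ a) \<le> 2"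
proof -
  have kernel: "positive_kernel (\<lambda>x y. om [mj x a, mj y a])"
    using positive_kernel_comp[OF is_state_positive_kernel[OF assms(1)], of "\<lambda>x. [mj x a]"] by simp
  have "AE p in lborel_pi. Im (Q p $ a $ a) = 0 \<and> 0 \<le> Re (Q p $ a $ a)"
    using kernel by (intro AE_nonneg_if_positive_kernel is_symbol_Linf[OF assms(2)])
      (simp add: is_symbol_two_point[OF assms(2)])
  moreover have "AE p in lborel_pi. Im (2 - Q p $ a $ a) = 0 \<and> 0 \<le> Re (2 - Q p $ a $ a)"
    using positive_kernel_swap[OF kernel]
    by (intro AE_nonneg_if_positive_kernel Linf_on_diff Linf_on_continuous continuous_on_const
        is_symbol_Linf[OF assms(2)]) (simp add: is_symbol_two_point_swap[OF assms])
  ultimately show ?thesis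
    by eventually_elim simp
qed

lemma mj_surj:
  obtains x a where "n = mj x a"
proof -
  have "n = mj (n div 2) (if even n then 1 else 2)"
    by (cases "even n") (simp_all add: mj_def)
  then show ?thesis
    by (rule that)
qed

lemma GF_idx_mj: "GF_idx (mj x a) = mj (if a = 1 then x - 1 else x + 1) a"
  by (simp add: GF_idx_def mj_def algebra_simps)

lemma symbol_offdiag_zero_if_GF_invariant:
  assumes symbol: "is_symbol om Q" and inv: "invariant_under GF_idx om" and "a \<noteq> b"
  shows "AE p in lborel_pi. Q p $ a $ b = 0"
proof -
  have GF_two_point: "om [GF_idx u, GF_idx v] = om [u, v]" for u v
    using inv[unfolded invariant_under_def, rule_format, of "[u, v]"] by simp
  consider "a = 1" "b = 2" | "a = 2" "b = 1"
    using \<open>a \<noteq> b\<close> exhaust_2[of a] exhaust_2[of b] by auto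
  then have "fourier_coeff (\<lambda>p. Q p $ a $ b) (m + 2) = fourier_coeff (\<lambda>p. Q p $ a $ b) m" for m
  proof cases
    case 1
    then show ?thesis
      using GF_two_point[of "mj (m + 2) a" "mj 0 b"] by (simp add: GF_idx_mj is_symbol_two_point[OF symbol])
  next
    case 2
    then show ?thesis
      using GF_two_point[of "mj m a" "mj 0 b"]
      by (simp add: GF_idx_mj is_symbol_two_point[OF symbol] add.commute)
  qed
  then show ?thesis
    by (rule AE_zero_if_fourier_coeff_2_periodic[OF is_symbol_Linf[OF symbol]])
qed

lemma two_point_GF_invariant_if_symbol_offdiag_zero:
  assumes symbol: "is_symbol om Q"
    and offdiag: "\<And>a b. a \<noteq> b \<Longrightarrow> AE p in lborel_pi. Q p $ a $ b = 0"
  shows "om [GF_idx u, GF_idx v] = om [u, v]"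
proof -
  obtain x a y b where uv: "u = mj x a" "v = mj y b"
    using mj_surj by metis
  show ?thesis
  proof (cases "a = b")
    case True
    then show ?thesis
      by (simp add: uv GF_idx_mj is_symbol_two_point[OF symbol])
  next
    case False
    then show ?thesis
      by (simp add: uv GF_idx_mj is_symbol_two_point[OF symbol] fourier_coeff_AE_zero offdiag)
  qed
qed

lemma quasifree_invariant_under:
  assumes qf: "quasifree om" and two_point: "\<And>u v. om [g u, g v] = om [u, v]"
  shows "invariant_under g om"
  unfolding invariant_under_def
proof
  fix w :: "int list"
  have odd: "om v = 0" if "odd (length v)" for v
    using qf that unfolding quasifree_def by blast
  have even: "om v = (\<Sum>\<sigma>\<in>pairings (length v div 2). of_int (sign \<sigma>) *
      (\<Prod>l<length v div 2. om [v ! \<sigma> (2 * l), v ! \<sigma> (2 * l + 1)]))" if "even (length v)" for v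
    using qf that unfolding quasifree_def by blast
  show "om (map g w) = om w"
  proof (cases "even (length w)")
    case True
    let ?n = "length w div 2"
    have pairs: "om [map g w ! \<sigma> (2 * l), map g w ! \<sigma> (2 * l + 1)]
        = om [w ! \<sigma> (2 * l), w ! \<sigma> (2 * l + 1)]"
      if "\<sigma> \<in> pairings ?n" "l < ?n" for \<sigma> l
    proof -
      have len: "2 * ?n = length w"
        using True by simp
      have perm: "\<sigma> permutes {..<length w}"
        using that(1) unfolding pairings_def len by simp
      have "2 * l + 1 < length w"
        using that(2) len by linarith
      then have "\<sigma> (2 * l) < length w" "\<sigma> (2 * l + 1) < length w"
        using permutes_in_image[OF perm, of "2 * l"] permutes_in_image[OF perm, of "2 * l + 1"]
        by auto
      then show ?thesis
        by (simp add: two_point)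
    qed
    have "om (map g w) = (\<Sum>\<sigma>\<in>pairings ?n. of_int (sign \<sigma>) *
        (\<Prod>l<?n. om [map g w ! \<sigma> (2 * l), map g w ! \<sigma> (2 * l + 1)]))"
      using even[of "map g w"] True by simp
    also have "\<dots> = (\<Sum>\<sigma>\<in>pairings ?n. of_int (sign \<sigma>) *
        (\<Prod>l<?n. om [w ! \<sigma> (2 * l), w ! \<sigma> (2 * l + 1)]))"
      using pairs by (intro sum.cong prod.cong arg_cong2[where f = "(*)"]) auto
    also have "\<dots> = om w"
      using even[of w] True by simp
    finally show ?thesis .
  next
    case False
    then show ?thesis
      using odd[of w] odd[of "map g w"] by simp
  qed
qed

lemma GF_invariant_iff_symbol_offdiag_zero:
  assumes qf: "quasifree om" and symbol: "is_symbol om Q"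
  shows "invariant_under GF_idx om \<longleftrightarrow>
    (AE p in lborel_pi. Q p $ 1 $ 2 = 0) \<and> (AE p in lborel_pi. Q p $ 2 $ 1 = 0)"
proof
  assume "invariant_under GF_idx om"
  then show "(AE p in lborel_pi. Q p $ 1 $ 2 = 0) \<and> (AE p in lborel_pi. Q p $ 2 $ 1 = 0)"
    using symbol_offdiag_zero_if_GF_invariant[OF symbol] by simp
next
  assume "(AE p in lborel_pi. Q p $ 1 $ 2 = 0) \<and> (AE p in lborel_pi. Q p $ 2 $ 1 = 0)"
  then have "AE p in lborel_pi. Q p $ a $ b = 0" if "a \<noteq> b" for a b :: 2
    using that exhaust_2[of a] exhaust_2[of b] by auto
  then show "invariant_under GF_idx om"
    by (intro quasifree_invariant_under[OF qf] two_point_GF_invariant_if_symbol_offdiag_zero[OF symbol])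
qed

lemma symbol_diagonal_form_iff_offdiag_zero:
  assumes state: "is_state om" and symbol: "is_symbol om Q"
  shows "(\<exists>q11 q22 :: real \<Rightarrow> real. Linf_on q11 \<and> Linf_on q22 \<and>
       (AE p in lborel. p \<in> {-pi..pi} \<longrightarrow>
          Q p $ 1 $ 1 = complex_of_real (q11 p) \<and> Q p $ 1 $ 2 = 0 \<and>
          Q p $ 2 $ 1 = 0 \<and> Q p $ 2 $ 2 = complex_of_real (q22 p) \<and>
          0 \<le> q11 p \<and> q11 p \<le> 2 \<and> 0 \<le> q22 p \<and> q22 p \<le> 2))
    \<longleftrightarrow> (AE p in lborel_pi. Q p $ 1 $ 2 = 0) \<and> (AE p in lborel_pi. Q p $ 2 $ 1 = 0)"
    (is "(\<exists>q11 q22. ?diag q11 q22) \<longleftrightarrow> ?offdiag")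
proof
  assume "\<exists>q11 q22. ?diag q11 q22"
  then show ?offdiag
    unfolding AE_lborel_pi_iff by (auto elim: AE_mp intro: AE_I2)
next
  assume offdiag: ?offdiag
  have diag: "AE p in lborel_pi. Im (Q p $ a $ a) = 0 \<and> 0 \<le> Re (Q p $ a $ a) \<and> Re (Q p $ a $ a) \<le> 2"
    for a
    by (rule symbol_diagonal_real_bounded[OF state symbol])
  have "AE p in lborel_pi. Q p $ 1 $ 1 = complex_of_real (Re (Q p $ 1 $ 1)) \<and> Q p $ 1 $ 2 = 0 \<and>
      Q p $ 2 $ 1 = 0 \<and> Q p $ 2 $ 2 = complex_of_real (Re (Q p $ 2 $ 2)) \<and>
      0 \<le> Re (Q p $ 1 $ 1) \<and> Re (Q p $ 1 $ 1) \<le> 2 \<and> 0 \<le> Re (Q p $ 2 $ 2) \<and> Re (Q p $ 2 $ 2) \<le> 2"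
    using offdiag[THEN conjunct1] offdiag[THEN conjunct2] diag[of 1] diag[of 2]
    by eventually_elim (simp add: complex_eq_iff)
  moreover have "Linf_on (\<lambda>p. Re (Q p $ a $ a))" for a
    by (rule Linf_on_bounded_linear[OF is_symbol_Linf[OF symbol] bounded_linear_Re])
  ultimately show "\<exists>q11 q22. ?diag q11 q22"
    unfolding AE_lborel_pi_iff by blast
qed

theorem mainTheorem10:
  fixes om :: "int list \<Rightarrow> complex" and Q :: "real \<Rightarrow> complex^2^2"
  assumes "is_state om" and "quasifree om" and "invariant_under tauF_idx om"
    and "is_symbol om Q"
  shows "invariant_under GF_idx om \<longleftrightarrow>
    (\<exists>q11 q22 :: real \<Rightarrow> real. Linf_on q11 \<and> Linf_on q22 \<and>
       (AE p in lborel. p \<in> {-pi..pi} \<longrightarrow>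
          Q p $ 1 $ 1 = complex_of_real (q11 p) \<and> Q p $ 1 $ 2 = 0 \<and>
          Q p $ 2 $ 1 = 0 \<and> Q p $ 2 $ 2 = complex_of_real (q22 p) \<and>
          0 \<le> q11 p \<and> q11 p \<le> 2 \<and> 0 \<le> q22 p \<and> q22 p \<le> 2))"
  unfolding GF_invariant_iff_symbol_offdiag_zero[OF assms(2,4)]
  by (rule symbol_diagonal_form_iff_offdiag_zero[OF assms(1,4), symmetric])

end
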